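(* Let $H$ be a connected $3$-uniform hypergraph on $n$ vertices. Then $|E(H)|\geq \left\lfloor \frac{1}{2}\binom{n}{2}\right\rfloor$. Moreover, this bound is attained: for every $n$ there exists a connected $3$-uniform hypergraph on $n$ vertices with exactly $\left\lfloor \frac{1}{2}\binom{n}{2}\right\rfloor$ edges.
   Context: A strong path in a $3$-uniform hypergraph $H$ is a sequence of edges $E_1,\dots,E_m$ of $H$ with $|E_t\cap E_{t+1}|=2$ for all $t$. $H$ is connected if for any two distinct $2$-subsets $\{u,v\},\{u',v'\}$ of $V(H)$ there is a strong path $E_1,\dots,E_m$ in $H$ with $\{u,v\}\subseteq E_1$ and $\{u',v'\}\subseteq E_m$ (for $n\le 2$ the condition is vacuous). *)

theory Defs
  imports Main
begin

definition uniform3 :: "'a set \<Rightarrow> 'a set set \<Rightarrow> bool" where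
  "uniform3 V E \<longleftrightarrow> finite V \<and> (\<forall>e\<in>E. e \<subseteq> V \<and> card e = 3)"

definition strong_path :: "'a set set \<Rightarrow> 'a set list \<Rightarrow> bool" where
  "strong_path E ps \<longleftrightarrow> ps \<noteq> [] \<and> set ps \<subseteq> E \<and>
     (\<forall>t. Suc t < length ps \<longrightarrow> card (ps ! t \<inter> ps ! Suc t) = 2)"

definition hg_connected :: "'a set \<Rightarrow> 'a set set \<Rightarrow> bool" where
  "hg_connected V E \<longleftrightarrow>
     (\<forall>P Q. P \<subseteq> V \<longrightarrow> card P = 2 \<longrightarrow> Q \<subseteq> V \<longrightarrow> card Q = 2 \<longrightarrow> P \<noteq> Q \<longrightarrow>
        (\<exists>ps. strong_path E ps \<and> P \<subseteq> hd ps \<and> Q \<subseteq> last ps))"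

end

theory Submission
  imports Defs
begin

text \<open>Lower bound: grow a family of edges from a single edge, each time adjoining an edge that meets
  an edge already taken in two vertices. Each adjoined edge brings at most two new pairs, so a
  family of \<open>k\<close> edges covers at most \<open>2k + 1\<close> pairs. A maximal such family covers every
  pair: a strong path from a covered pair to an uncovered one would leave the family through an
  edge that could still be adjoined. Hence \<open>n choose 2 \<le> 2|E| + 1\<close>.

  Upper bound: explicit hypergraphs for \<open>3 \<le> n \<le> 6\<close>, and a step from \<open>n\<close> to \<open>n + 4\<close> vertices
  adding \<open>2n + 3\<close> edges that cover the \<open>4n + 6\<close> new pairs while keeping all edges strongly
  connected. Such a hypergraph is connected, so the lower bound makes its size exact.\<close>

section \<open>Strongly connected families of edges\<close>

lemma strong_path_iff:
  "strong_path E ps \<longleftrightarrow> ps \<noteq> [] \<and> set ps \<subseteq> E \<and> successively (\<lambda>e f. card (e \<inter> f) = 2) ps"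
  unfolding strong_path_def successively_conv_nth by blast

definition strongly_linked :: "'a set set \<Rightarrow> 'a set \<Rightarrow> 'a set \<Rightarrow> bool" where
  "strongly_linked E e f \<longleftrightarrow> (\<exists>ps. strong_path E ps \<and> hd ps = e \<and> last ps = f)"

lemma strongly_linked_refl: "e \<in> E \<Longrightarrow> strongly_linked E e e"
  unfolding strongly_linked_def strong_path_iff by (intro exI[of _ "[e]"]) simp

lemma strongly_linked_adjacent:
  "e \<in> E \<Longrightarrow> f \<in> E \<Longrightarrow> card (e \<inter> f) = 2 \<Longrightarrow> strongly_linked E e f"
  unfolding strongly_linked_def strong_path_iff by (intro exI[of _ "[e, f]"]) simp

lemma strongly_linked_mono: "strongly_linked E e f \<Longrightarrow> E \<subseteq> F \<Longrightarrow> strongly_linked F e f"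
  unfolding strongly_linked_def strong_path_iff by blast

lemma strongly_linked_trans:
  assumes "strongly_linked E e f" "strongly_linked E f g"
  shows "strongly_linked E e g"
proof -
  obtain ps qs where ps: "strong_path E ps" "hd ps = e" "last ps = f"
    and qs: "strong_path E qs" "hd qs = f" "last qs = g"
    using assms unfolding strongly_linked_def by blast
  then obtain qs' where qs': "qs = f # qs'"
    by (cases qs) (auto simp: strong_path_iff)
  have "strong_path E (ps @ qs')"
    using ps qs unfolding qs' strong_path_iff
    by (auto simp: successively_append_iff successively_Cons)
  moreover have "hd (ps @ qs') = e" "last (ps @ qs') = g"
    using ps qs unfolding qs' by (auto simp: strong_path_iff split: if_splits)
  ultimately show ?thesis
    unfolding strongly_linked_def by blast
qed

definition linked_edges :: "'a set set \<Rightarrow> bool" where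
  "linked_edges E \<longleftrightarrow> (\<forall>e\<in>E. \<forall>f\<in>E. strongly_linked E e f)"

lemma linked_edges_if_pairwise_adjacent:
  "(\<And>e f. e \<in> E \<Longrightarrow> f \<in> E \<Longrightarrow> e \<noteq> f \<Longrightarrow> card (e \<inter> f) = 2) \<Longrightarrow> linked_edges E"
  unfolding linked_edges_def using strongly_linked_refl strongly_linked_adjacent by metis

lemma linked_edges_Un:
  assumes E: "linked_edges E" and F: "linked_edges F"
    and adj: "e \<in> E" "f \<in> F" "card (e \<inter> f) = 2"
  shows "linked_edges (E \<union> F)"
proof -
  have EF: "strongly_linked (E \<union> F) x y" if "x \<in> E" "y \<in> F" for x y
  proof -
    have "strongly_linked (E \<union> F) x e" "strongly_linked (E \<union> F) f y"
      using E F that adj strongly_linked_mono unfolding linked_edges_def by blast+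
    moreover have "strongly_linked (E \<union> F) e f"
      using adj by (intro strongly_linked_adjacent) auto
    ultimately show ?thesis
      using strongly_linked_trans by metis
  qed
  have FE: "strongly_linked (E \<union> F) y x" if "x \<in> E" "y \<in> F" for x y
  proof -
    have "strongly_linked (E \<union> F) y f" "strongly_linked (E \<union> F) e x"
      using E F that adj strongly_linked_mono unfolding linked_edges_def by blast+
    moreover have "strongly_linked (E \<union> F) f e"
      using adj by (intro strongly_linked_adjacent) (auto simp: Int_commute)
    ultimately show ?thesis
      using strongly_linked_trans by metis
  qed
  show ?thesis
    using E F EF FE strongly_linked_mono unfolding linked_edges_def
    by (metis Un_iff sup_ge1 sup_ge2)
qed

lemma linked_edges_singleton: "linked_edges {e}"
  by (rule linked_edges_if_pairwise_adjacent) simp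

lemma linked_edges_insert:
  assumes "linked_edges E" "\<exists>f\<in>E. card (e \<inter> f) = 2"
  shows "linked_edges (insert e E)"
proof -
  obtain f where "f \<in> E" "card (f \<inter> e) = 2"
    using assms(2) by (auto simp: Int_commute)
  then have "linked_edges (E \<union> {e})"
    using assms(1) linked_edges_singleton by (intro linked_edges_Un) auto
  then show ?thesis by simp
qed

lemma card_Int_eq_2_if_common_pair:
  assumes "card e = 3" "card f = 3" "e \<noteq> f" "K \<subseteq> e \<inter> f" "card K = 2"
  shows "card (e \<inter> f) = 2"
proof -
  have "finite e" using assms(1) by (intro card_ge_0_finite) simp
  have "e \<inter> f \<subset> e"
    using assms(1-3) card_subset_eq[of f e] card_ge_0_finite[of f] by fastforce
  then have "card (e \<inter> f) < 3"
    using psubset_card_mono[OF \<open>finite e\<close>] assms(1) by metis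
  moreover have "2 \<le> card (e \<inter> f)"
    using card_mono[of "e \<inter> f" K] \<open>finite e\<close> assms(4,5) by simp
  ultimately show ?thesis by simp
qed

lemma linked_edges_sunflower:
  assumes "card K = 2" "I \<inter> K = {}"
  shows "linked_edges ((\<lambda>i. insert i K) ` I)"
proof (rule linked_edges_if_pairwise_adjacent)
  have "finite K" using assms(1) by (intro card_ge_0_finite) simp
  fix e f assume "e \<in> (\<lambda>i. insert i K) ` I" "f \<in> (\<lambda>i. insert i K) ` I" "e \<noteq> f"
  then obtain i j where "i \<in> I" "j \<in> I" "e = insert i K" "f = insert j K" by blast
  moreover have "card (insert k K) = 3" if "k \<in> I" for k
    using that assms \<open>finite K\<close> by (simp add: disjoint_iff)
  ultimately show "card (e \<inter> f) = 2"
    using \<open>e \<noteq> f\<close> assms(1) by (intro card_Int_eq_2_if_common_pair[of _ _ K]) auto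
qed

definition covers_pairs :: "'a set \<Rightarrow> 'a set set \<Rightarrow> bool" where
  "covers_pairs V E \<longleftrightarrow> (\<forall>u\<in>V. \<forall>v\<in>V. u \<noteq> v \<longrightarrow> (\<exists>e\<in>E. u \<in> e \<and> v \<in> e))"

lemma hg_connected_if_linked_covering:
  assumes "linked_edges E" "covers_pairs V E"
  shows "hg_connected V E"
  unfolding hg_connected_def
proof (intro allI impI)
  fix P Q assume PQ: "P \<subseteq> V" "card P = 2" "Q \<subseteq> V" "card Q = 2"
  obtain e f where "e \<in> E" "P \<subseteq> e" "f \<in> E" "Q \<subseteq> f"
    using PQ assms(2) unfolding covers_pairs_def card_2_iff by (metis empty_subsetI insert_subset)
  moreover have "strongly_linked E e f"
    using assms(1) \<open>e \<in> E\<close> \<open>f \<in> E\<close> unfolding linked_edges_def by blast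
  ultimately show "\<exists>ps. strong_path E ps \<and> P \<subseteq> hd ps \<and> Q \<subseteq> last ps"
    unfolding strongly_linked_def by blast
qed

lemma hg_connected_if_card_le_2:
  assumes "finite V" "card V \<le> 2"
  shows "hg_connected V E"
  unfolding hg_connected_def
proof (intro allI impI)
  fix P Q assume PQ: "P \<subseteq> V" "card P = 2" "Q \<subseteq> V" "card Q = 2" "P \<noteq> Q"
  then have "P = V" "Q = V"
    using assms card_mono[of V] card_subset_eq[of V] by (metis le_antisym)+
  with \<open>P \<noteq> Q\<close> show "\<exists>ps. strong_path E ps \<and> P \<subseteq> hd ps \<and> Q \<subseteq> last ps" by simp
qed

section \<open>The lower bound\<close>

definition two_subsets :: "'a set \<Rightarrow> 'a set set" where
  "two_subsets X = {P. P \<subseteq> X \<and> card P = 2}"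

lemma finite_two_subsets: "finite X \<Longrightarrow> finite (two_subsets X)"
  unfolding two_subsets_def by (rule finite_subset[of _ "Pow X"]) auto

lemma card_two_subsets: "finite X \<Longrightarrow> card (two_subsets X) = card X choose 2"
  unfolding two_subsets_def by (rule n_subsets)

inductive grown :: "'a set set \<Rightarrow> 'a set set \<Rightarrow> bool" for E where
  single: "e \<in> E \<Longrightarrow> grown E {e}"
| extend: "grown E S \<Longrightarrow> x \<in> S \<Longrightarrow> y \<in> E \<Longrightarrow> 2 \<le> card (x \<inter> y) \<Longrightarrow> grown E (insert y S)"

lemma grown_subset: "grown E S \<Longrightarrow> S \<subseteq> E"
  by (induction rule: grown.induct) auto

lemma grown_nonempty: "grown E S \<Longrightarrow> S \<noteq> {}"
  by (induction rule: grown.induct) auto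

lemma grown_finite: "grown E S \<Longrightarrow> finite S"
  by (induction rule: grown.induct) auto

lemma card_Union_two_subsets_grown:
  assumes card3: "\<forall>e\<in>E. card e = 3" and "grown E S"
  shows "card (\<Union>(two_subsets ` S)) \<le> 2 * card S + 1"
  using \<open>grown E S\<close>
proof (induction rule: grown.induct)
  case (single e)
  then have "card e = 3" using card3 by blast
  then show ?case
    using card_two_subsets[of e] card_ge_0_finite[of e] by (simp add: choose_two)
next
  case (extend S x y)
  let ?U = "\<Union>(two_subsets ` S)"
  show ?case
  proof (cases "y \<in> S")
    case True
    with extend.IH show ?thesis by (simp add: insert_absorb)
  next
    case False
    have y: "finite y" "card y = 3"
      using card3 extend.hyps(3) card_ge_0_finite[of y] by auto
    obtain P where P: "P \<subseteq> x \<inter> y" "card P = 2"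
      using obtain_subset_with_card_n[OF extend.hyps(4)] by blast
    have "P \<in> ?U" "P \<in> two_subsets y"
      using P extend.hyps(2) unfolding two_subsets_def by auto
    then have split: "\<Union>(two_subsets ` insert y S) = ?U \<union> (two_subsets y - {P})"
      by auto
    have "card (two_subsets y - {P}) = 2"
      using \<open>P \<in> two_subsets y\<close> y card_two_subsets[of y] finite_two_subsets[of y]
      by (simp add: choose_two)
    then have "card (\<Union>(two_subsets ` insert y S)) \<le> card ?U + 2"
      unfolding split using card_Un_le[of ?U "two_subsets y - {P}"] by linarith
    moreover have "card (insert y S) = Suc (card S)"
      using False grown_finite[OF extend.hyps(1)] by simp
    ultimately show ?thesis
      using extend.IH by simp
  qed
qed

lemma successively_leaves_set:
  assumes "successively R xs" "xs \<noteq> []" "hd xs \<in> S" "last xs \<notin> S"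
  shows "\<exists>x y. x \<in> S \<and> y \<in> set xs - S \<and> R x y"
  using assms
proof (induction xs)
  case (Cons a xs)
  then have "xs \<noteq> []" "R a (hd xs)" "successively R xs"
    by (auto simp: successively_Cons)
  then show ?case
    using Cons by (cases "hd xs \<in> S") (auto dest: hd_in_set)
qed simp

lemma maximal_grown_covers_pairs:
  assumes "uniform3 V E" "hg_connected V E" "grown E S"
    and maximal: "\<And>y. grown E (insert y S) \<Longrightarrow> y \<in> S"
    and "Q \<subseteq> V" "card Q = 2"
  shows "\<exists>e\<in>S. Q \<subseteq> e"
proof (rule ccontr)
  assume uncovered: "\<not> (\<exists>e\<in>S. Q \<subseteq> e)"
  obtain e where e: "e \<in> S" "e \<subseteq> V" "card e = 3"
    using assms(1) grown_nonempty[OF assms(3)] grown_subset[OF assms(3)]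
    unfolding uniform3_def by blast
  have "2 \<le> card e" using e(3) by simp
  then obtain P where P: "P \<subseteq> e" "card P = 2"
    by (rule obtain_subset_with_card_n)
  have "P \<subseteq> V" "P \<noteq> Q"
    using P e uncovered by auto
  then obtain ps where ps: "strong_path E ps" "P \<subseteq> hd ps" "Q \<subseteq> last ps"
    using assms(2) P(2) assms(5,6) unfolding hg_connected_def by meson
  have path: "successively (\<lambda>x y. 2 \<le> card (x \<inter> y)) (e # ps)"
  proof -
    have "successively (\<lambda>x y. card (x \<inter> y) = 2) ps"
      using ps(1) unfolding strong_path_iff by blast
    then have "successively (\<lambda>x y. 2 \<le> card (x \<inter> y)) ps"
      by (rule successively_mono) simp
    have "finite (e \<inter> hd ps)"
      using e(3) card_ge_0_finite[of e] by simp
    moreover have "P \<subseteq> e \<inter> hd ps"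
      using P(1) ps(2) by blast
    ultimately have "2 \<le> card (e \<inter> hd ps)"
      using card_mono P(2) by metis
    with \<open>successively (\<lambda>x y. 2 \<le> card (x \<inter> y)) ps\<close> show ?thesis
      by (simp add: successively_Cons)
  qed
  have "last (e # ps) \<notin> S"
    using ps uncovered by (auto simp: strong_path_iff)
  then have "\<exists>x y. x \<in> S \<and> y \<in> set (e # ps) - S \<and> 2 \<le> card (x \<inter> y)"
    using successively_leaves_set[OF path] e(1) by simp
  then obtain x y where "x \<in> S" "y \<in> set ps - S" "2 \<le> card (x \<inter> y)"
    using e(1) by auto
  then have "grown E (insert y S)"
    using ps(1) assms(3) grown.extend unfolding strong_path_iff by blast
  with maximal \<open>y \<in> set ps - S\<close> show False by blast
qed

lemma hg_connected_nonempty: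
  assumes "hg_connected V E" "3 \<le> card V"
  shows "E \<noteq> {}"
proof -
  obtain T where "T \<subseteq> V" "card T = 3"
    using assms(2) obtain_subset_with_card_n[of 3 V] by auto
  then obtain a b c where "{a, b, c} \<subseteq> V" "a \<noteq> b" "b \<noteq> c" "a \<noteq> c"
    by (auto simp: card_3_iff)
  then have "{a, b} \<subseteq> V" "{a, c} \<subseteq> V" "card {a, b} = 2" "card {a, c} = 2" "{a, b} \<noteq> {a, c}"
    by (auto simp: doubleton_eq_iff)
  then obtain ps where "strong_path E ps"
    using assms(1) unfolding hg_connected_def by meson
  then show ?thesis
    by (auto simp: strong_path_iff)
qed

lemma grown_maximal_exists:
  assumes "finite E" "E \<noteq> {}"
  obtains S where "grown E S" "\<And>y. grown E (insert y S) \<Longrightarrow> y \<in> S"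
proof -
  have "finite {S. grown E S}"
    by (rule finite_subset[of _ "Pow E"]) (use assms(1) grown_subset in auto)
  moreover have "{S. grown E S} \<noteq> {}"
    using assms(2) grown.single by blast
  ultimately have "\<exists>m\<in>{S. grown E S}. \<forall>S'\<in>{S. grown E S}. m \<subseteq> S' \<longrightarrow> m = S'"
    by (rule finite_has_maximal)
  then show ?thesis
    using that by blast
qed

lemma hg_connected_choose_2_le:
  assumes U: "uniform3 V E" and C: "hg_connected V E"
  shows "card V choose 2 \<le> 2 * card E + 1"
proof (cases "card V \<le> 2")
  case True
  then have "card V choose 2 \<le> 1"
    by (cases "card V = 2") (simp_all add: binomial_eq_0)
  then show ?thesis by simp
next
  case False
  have "finite V" and edges: "\<And>e. e \<in> E \<Longrightarrow> e \<subseteq> V \<and> card e = 3"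
    using U unfolding uniform3_def by auto
  then have "finite E"
    by (intro finite_subset[of E "Pow V"]) auto
  moreover have "E \<noteq> {}"
    using C False by (intro hg_connected_nonempty) auto
  ultimately obtain S where S: "grown E S" and maximal: "\<And>y. grown E (insert y S) \<Longrightarrow> y \<in> S"
    using grown_maximal_exists by blast
  have "two_subsets V \<subseteq> \<Union>(two_subsets ` S)"
  proof
    fix Q assume "Q \<in> two_subsets V"
    then have Q: "Q \<subseteq> V" "card Q = 2"
      unfolding two_subsets_def by auto
    then obtain e where "e \<in> S" "Q \<subseteq> e"
      using maximal_grown_covers_pairs[OF U C S maximal] by blast
    with Q show "Q \<in> \<Union>(two_subsets ` S)"
      unfolding two_subsets_def by blast
  qed
  moreover have "finite (\<Union>(two_subsets ` S))"
    using grown_finite[OF S] grown_subset[OF S] edges finite_two_subsets card_ge_0_finite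
    by (metis finite_UN_I gr0I subsetD zero_neq_numeral)
  ultimately have "card V choose 2 \<le> card (\<Union>(two_subsets ` S))"
    using card_mono card_two_subsets[OF \<open>finite V\<close>] by metis
  also have "\<dots> \<le> 2 * card S + 1"
    by (rule card_Union_two_subsets_grown[OF _ S]) (use edges in blast)
  also have "\<dots> \<le> 2 * card E + 1"
    using card_mono[OF \<open>finite E\<close> grown_subset[OF S]] by simp
  finally show ?thesis .
qed

section \<open>A construction attaining the bound\<close>

lemma uniform3_Un: "uniform3 V E \<Longrightarrow> uniform3 V F \<Longrightarrow> uniform3 V (E \<union> F)"
  unfolding uniform3_def by blast

lemma uniform3_mono: "uniform3 V E \<Longrightarrow> V \<subseteq> W \<Longrightarrow> finite W \<Longrightarrow> uniform3 W E"
  unfolding uniform3_def by blast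

text \<open>Two sunflowers with kernels \<open>{n, n + 1}\<close> and \<open>{n + 2, n + 3}\<close>, tied to each other and to
  an old edge containing \<open>{0, 1}\<close> by the three remaining edges.\<close>
definition extension_edges :: "nat \<Rightarrow> nat set set" where
  "extension_edges n = {{0, 1, n}, {0, n, n + 2}, {0, n + 1, n + 2}}
     \<union> (\<lambda>i. {i, n, n + 1}) ` insert (n + 3) {1..<n}
     \<union> (\<lambda>i. {i, n + 2, n + 3}) ` {..<n}"

lemma card_extension_edges_le:
  assumes "1 \<le> n"
  shows "card (extension_edges n) \<le> 2 * n + 3"
proof -
  let ?A = "{{0, 1, n}, {0, n, n + 2}, {0, n + 1, n + 2}}"
  let ?B = "(\<lambda>i. {i, n, n + 1}) ` insert (n + 3) {1..<n}"
  let ?C = "(\<lambda>i. {i, n + 2, n + 3}) ` {..<n}"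
  have "card ?A \<le> 3"
    using card_length[of "[{0, 1, n}, {0, n, n + 2}, {0, n + 1, n + 2}]"] by simp
  moreover have "card ?B \<le> n"
    using card_image_le[of "insert (n + 3) {1..<n}"] card_insert_le_m1[of n "{1..<n}"] assms
    by simp
  moreover have "card ?C \<le> n"
    using card_image_le[of "{..<n}"] by simp
  ultimately show ?thesis
    unfolding extension_edges_def using card_Un_le[of "?A \<union> ?B" ?C] card_Un_le[of ?A ?B]
    by linarith
qed

lemma uniform3_extension_edges:
  assumes "2 \<le> n"
  shows "uniform3 {..<n + 4} (extension_edges n)"
  unfolding uniform3_def
proof (rule conjI[OF _ ballI])
  show "finite {..<n + 4}" by simp
  have card3: "card {a, b, c} = 3" if "a \<noteq> b" "a \<noteq> c" "b \<noteq> c" for a b c :: nat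
    using that by simp
  fix e assume "e \<in> extension_edges n"
  then consider "e \<in> {{0, 1, n}, {0, n, n + 2}, {0, n + 1, n + 2}}"
    | i where "i \<in> insert (n + 3) {1..<n}" "e = {i, n, n + 1}"
    | i where "i < n" "e = {i, n + 2, n + 3}"
    unfolding extension_edges_def by blast
  then show "e \<subseteq> {..<n + 4} \<and> card e = 3"
  proof cases
    case 1
    then show ?thesis using assms by auto
  next
    case 2
    then show ?thesis using card3[of i n "n + 1"] by auto
  next
    case 3
    then show ?thesis using card3[of i "n + 2" "n + 3"] by auto
  qed
qed

lemma extension_edges_cover:
  assumes "1 \<le> n" "u < v" "n \<le> v" "v < n + 4"
  shows "\<exists>e\<in>extension_edges n. u \<in> e \<and> v \<in> e"
proof -
  have "v = n \<or> v = n + 1 \<or> v = n + 2 \<or> v = n + 3"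
    using assms by arith
  moreover have "u < n \<or> u = n \<or> u = n + 1 \<or> u = n + 2"
    using assms by arith
  moreover have "\<exists>i. i < n"
    using assms(1) by (intro exI[of _ 0]) simp
  ultimately show ?thesis
    using assms unfolding extension_edges_def by (elim disjE) (auto simp: bex_Un)
qed

lemma linked_edges_Un_extension_edges:
  assumes "2 \<le> n" "linked_edges E" "f \<in> E" "{0, 1} \<subseteq> f" "n \<notin> f"
  shows "linked_edges (E \<union> extension_edges n)"
proof -
  let ?S1 = "(\<lambda>i. insert i {n, n + 1}) ` insert (n + 3) {1..<n}"
  let ?S2 = "(\<lambda>i. insert i {n + 2, n + 3}) ` {..<n}"
  let ?E1 = "insert {0, 1, n} E"
  let ?E2 = "insert {0, n, n + 2} (?E1 \<union> ?S1)"
  let ?E3 = "insert {0, n + 1, n + 2} (?E2 \<union> ?S2)"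
  have "card ({0, 1, n} \<inter> f) = 2"
    using assms(4,5) by (simp add: insert_absorb)
  then have "linked_edges ?E1"
    using linked_edges_insert[OF assms(2)] assms(3) by blast
  moreover have "linked_edges ?S1"
    by (rule linked_edges_sunflower) auto
  moreover have "card ({0, 1, n} \<inter> {1, n, n + 1}) = 2"
    using assms(1) by (simp add: insert_commute)
  moreover have "{1, n, n + 1} \<in> ?S1"
    using assms(1) by simp
  ultimately have "linked_edges (?E1 \<union> ?S1)"
    using linked_edges_Un[of ?E1 ?S1 "{0, 1, n}" "{1, n, n + 1}"] by simp
  moreover have "card ({0, n, n + 2} \<inter> {0, 1, n}) = 2"
    using assms(1) by (simp add: insert_commute)
  ultimately have "linked_edges ?E2"
    using linked_edges_insert by blast
  moreover have "linked_edges ?S2"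
    by (rule linked_edges_sunflower) auto
  moreover have "card ({0, n, n + 2} \<inter> {0, n + 2, n + 3}) = 2"
    by simp
  moreover have "{0, n + 2, n + 3} \<in> ?S2"
    using assms(1) by simp
  ultimately have "linked_edges (?E2 \<union> ?S2)"
    using linked_edges_Un[of ?E2 ?S2 "{0, n, n + 2}" "{0, n + 2, n + 3}"] by simp
  moreover have "card ({0, n + 1, n + 2} \<inter> {0, n, n + 2}) = 2"
    by simp
  ultimately have "linked_edges ?E3"
    using linked_edges_insert by blast
  moreover have "?E3 = E \<union> extension_edges n"
    unfolding extension_edges_def by auto
  ultimately show ?thesis by simp
qed

lemma covers_pairs_Un_extension_edges:
  assumes "1 \<le> n" "covers_pairs {..<n} E"
  shows "covers_pairs {..<n + 4} (E \<union> extension_edges n)"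
  unfolding covers_pairs_def
proof (intro ballI impI)
  fix u v assume "u \<in> {..<n + 4}" "v \<in> {..<n + 4}" "u \<noteq> v"
  then have uv: "u < n + 4" "v < n + 4" "u \<noteq> v" by auto
  show "\<exists>e\<in>E \<union> extension_edges n. u \<in> e \<and> v \<in> e"
  proof (cases "u < n \<and> v < n")
    case True
    then show ?thesis
      using assms(2) uv(3) unfolding covers_pairs_def by auto
  next
    case False
    have "\<exists>e\<in>extension_edges n. u \<in> e \<and> v \<in> e"
    proof (cases "u < v")
      case True
      with False uv assms(1) show ?thesis by (intro extension_edges_cover) auto
    next
      case False
      with \<open>\<not> (u < n \<and> v < n)\<close> uv assms(1) show ?thesis
        using extension_edges_cover[of n v u] by auto
    qed
    then show ?thesis by blast
  qed
qed

lemma choose_2_add_4_div_2: "(n + 4 choose 2) div 2 = (n choose 2) div 2 + (2 * n + 3)"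
proof -
  have "Suc m choose 2 = (m choose 2) + m" for m
    using binomial_Suc_Suc[of m 1] by (simp add: numeral_2_eq_2)
  then have "n + 4 choose 2 = (n choose 2) + 2 * (2 * n + 3)"
    by (simp add: numeral_eq_Suc)
  then show ?thesis by simp
qed

text \<open>The value for \<open>n < 3\<close> is never used. The base families are listed so that every edge meets
  a later one in two vertices, which lets \<open>linked_edges_insert\<close> build them up edge by edge.\<close>
fun linked_cover :: "nat \<Rightarrow> nat set set" where
  "linked_cover n =
     (if n \<le> 3 then {{0, 1, 2}}
      else if n = 4 then {{0, 1, 2}, {0, 1, 3}, {1, 2, 3}}
      else if n = 5 then {{2, 3, 4}, {0, 1, 4}, {1, 2, 3}, {0, 1, 3}, {0, 1, 2}}
      else if n = 6 then {{2, 3, 4}, {2, 4, 5}, {1, 3, 5}, {0, 2, 5}, {0, 1, 4}, {0, 1, 3}, {0, 1, 2}}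
      else linked_cover (n - 4) \<union> extension_edges (n - 4))"

declare linked_cover.simps [simp del]

definition small_linked_cover :: "nat \<Rightarrow> nat set set \<Rightarrow> bool" where
  "small_linked_cover n E \<longleftrightarrow> uniform3 {..<n} E \<and> linked_edges E \<and> covers_pairs {..<n} E
     \<and> card E \<le> (n choose 2) div 2"

lemma small_linked_cover_base:
  assumes "3 \<le> n" "n \<le> 6"
  shows "small_linked_cover n (linked_cover n)"
proof -
  have "n = 3 \<or> n = 4 \<or> n = 5 \<or> n = 6"
    using assms by arith
  then show ?thesis
    unfolding small_linked_cover_def uniform3_def covers_pairs_def
    by (elim disjE)
      (simp_all add: linked_cover.simps lessThan_nat_numeral choose_two linked_edges_singleton
        linked_edges_insert card_insert_if)
qed

lemma small_linked_cover_extend: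
  assumes n: "3 \<le> n" and E: "small_linked_cover n E"
  shows "small_linked_cover (n + 4) (E \<union> extension_edges n)"
proof -
  have U: "uniform3 {..<n} E" and L: "linked_edges E" and C: "covers_pairs {..<n} E"
    and card_E: "card E \<le> (n choose 2) div 2"
    using E unfolding small_linked_cover_def by auto
  have "uniform3 {..<n + 4} (E \<union> extension_edges n)"
    using uniform3_mono[OF U] uniform3_extension_edges n by (intro uniform3_Un) auto
  moreover have "linked_edges (E \<union> extension_edges n)"
  proof -
    obtain f where "f \<in> E" "0 \<in> f" "1 \<in> f"
      using C[unfolded covers_pairs_def, rule_format, of 0 1] n by auto
    moreover have "n \<notin> f"
      using U \<open>f \<in> E\<close> unfolding uniform3_def by auto
    ultimately show ?thesis
      using linked_edges_Un_extension_edges[OF _ L, of n f] n by simp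
  qed
  moreover have "covers_pairs {..<n + 4} (E \<union> extension_edges n)"
    using C n by (intro covers_pairs_Un_extension_edges) auto
  moreover have "card (E \<union> extension_edges n) \<le> (n + 4 choose 2) div 2"
    using card_Un_le[of E "extension_edges n"] card_extension_edges_le[of n] card_E n
    unfolding choose_2_add_4_div_2 by linarith
  ultimately show ?thesis
    unfolding small_linked_cover_def by blast
qed

lemma small_linked_cover_linked_cover: "3 \<le> n \<Longrightarrow> small_linked_cover n (linked_cover n)"
proof (induction n rule: less_induct)
  case (less n)
  show ?case
  proof (cases "n \<le> 6")
    case True
    with less.prems show ?thesis by (rule small_linked_cover_base)
  next
    case False
    then have "linked_cover n = linked_cover (n - 4) \<union> extension_edges (n - 4)"
      by (simp add: linked_cover.simps)
    moreover have "small_linked_cover (n - 4) (linked_cover (n - 4))"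
      using False by (intro less.IH) auto
    ultimately show ?thesis
      using small_linked_cover_extend[of "n - 4"] False by simp
  qed
qed

lemma exists_tight_connected_hypergraph:
  "\<exists>E :: nat set set. uniform3 {..<n} E \<and> hg_connected {..<n} E \<and> card E = (n choose 2) div 2"
proof (cases "n \<le> 2")
  case True
  then have "(n choose 2) div 2 = 0"
    by (cases "n = 2") (simp_all add: binomial_eq_0)
  moreover have "hg_connected {..<n} {}"
    using True by (intro hg_connected_if_card_le_2) simp_all
  ultimately show ?thesis
    by (intro exI[of _ "{}"]) (simp add: uniform3_def)
next
  case False
  then have "small_linked_cover n (linked_cover n)"
    by (intro small_linked_cover_linked_cover) simp
  then have U: "uniform3 {..<n} (linked_cover n)" and C: "hg_connected {..<n} (linked_cover n)"
    and "card (linked_cover n) \<le> (n choose 2) div 2"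
    unfolding small_linked_cover_def by (auto intro: hg_connected_if_linked_covering)
  moreover have "(n choose 2) div 2 \<le> card (linked_cover n)"
    using div_le_mono[OF hg_connected_choose_2_le[OF U C], of 2] by simp
  ultimately show ?thesis
    by (intro exI[of _ "linked_cover n"]) simp
qed

theorem lemma13:
  shows "(\<forall>(V :: 'a set) E. uniform3 V E \<longrightarrow> hg_connected V E \<longrightarrow>
            card E \<ge> (card V choose 2) div 2)
       \<and> (\<forall>n::nat. \<exists>E :: nat set set. uniform3 {..<n} E \<and> hg_connected {..<n} E
            \<and> card E = (n choose 2) div 2)"
proof (intro conjI allI impI)
  fix V :: "'a set" and E
  assume "uniform3 V E" "hg_connected V E"
  then show "(card V choose 2) div 2 \<le> card E"
    using div_le_mono[OF hg_connected_choose_2_le, of V E 2] by simp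
qed (rule exists_tight_connected_hypergraph)

end
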